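(* Suppose that either $r>\dfrac{\beta b}{m+\mu}$, or $\beta b(r-n)+rn(m+\mu)>0$. Then system (S) has an equilibrium of the form $E_5=\big(0,\,\tfrac{b}{m+\mu},\,M_5,\,N_5\big)$ with $M_5>0$ and $N_5>0$.
   Context: The model (S) is the system of ODEs for healthy bees $B$, infected bees $I$, healthy mites $M$ and infected mites $N$: $$B'=b\frac{B}{B+I}-\lambda BN-\gamma BI-mB,$$ $$I'=b\frac{I}{B+I}+\lambda BN+\gamma BI-(m+\mu)I,$$ $$M'=r\Big(1-\frac{M+N}{K}\Big)(M+N)-\beta MI-\delta MN-eMB,$$ $$N'=-nN-pN(N+M)+\beta MI+\delta MN-eNB,$$ where all parameters $b,\lambda,\gamma,m,\mu,r,K,\beta,\delta,e,n,p$ are positive constants. *)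

theory Defs
  imports Complex_Main
begin

definition S_field ::
  "real \<Rightarrow> real \<Rightarrow> real \<Rightarrow> real \<Rightarrow> real \<Rightarrow> real \<Rightarrow> real \<Rightarrow> real \<Rightarrow> real \<Rightarrow> real \<Rightarrow> real \<Rightarrow> real
   \<Rightarrow> real \<times> real \<times> real \<times> real \<Rightarrow> real \<times> real \<times> real \<times> real" where
  "S_field b lam gam m mu r K beta delta e n p = (\<lambda>(B, I, M, N).
     ( b * B / (B + I) - lam * B * N - gam * B * I - m * B,
       b * I / (B + I) + lam * B * N + gam * B * I - (m + mu) * I,
       r * (1 - (M + N) / K) * (M + N) - beta * M * I - delta * M * N - e * M * B,
       - n * N - p * N * (N + M) + beta * M * I + delta * M * N - e * N * B))"

definition S_equilibrium ::
  "real \<Rightarrow> real \<Rightarrow> real \<Rightarrow> real \<Rightarrow> real \<Rightarrow> real \<Rightarrow> real \<Rightarrow> real \<Rightarrow> real \<Rightarrow> real \<Rightarrow> real \<Rightarrow> real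
   \<Rightarrow> real \<times> real \<times> real \<times> real \<Rightarrow> bool" where
  "S_equilibrium b lam gam m mu r K beta delta e n p x \<longleftrightarrow>
     S_field b lam gam m mu r K beta delta e n p x = (0, 0, 0, 0)"

end

theory Submission
  imports Defs
begin

text \<open>With no healthy bees the bee equations force \<open>I = b/(m+\<mu>)\<close>, and the mite equations
  become a system with constant infection pressure \<open>c = \<beta>I\<close>. Adding them shows that the
  total mite load \<open>T = M + N\<close> determines \<open>N = rT(1 - T/K)/(n + pT)\<close>; substituting back gives
  one scalar equation for \<open>T\<close>, whose left side is negative at \<open>K\<close> and, under the
  hypothesis, positive at \<open>0\<close>. A root strictly between \<open>0\<close> and \<open>K\<close> gives \<open>M, N > 0\<close>.\<close>

definition mite_balance ::
  "real \<Rightarrow> real \<Rightarrow> real \<Rightarrow> real \<Rightarrow> real \<Rightarrow> real \<Rightarrow> real \<Rightarrow> real \<Rightarrow> bool" where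
  "mite_balance r K c delta n p M N \<longleftrightarrow>
     r * (1 - (M + N) / K) * (M + N) - c * M - delta * M * N = 0 \<and>
     - n * N - p * N * (N + M) + c * M + delta * M * N = 0"

text \<open>Obtained from \<open>M (c + \<delta>N) = N (n + pT)\<close> with \<open>M = T - N\<close>, \<open>N = rT(1 - T/K)/(n + pT)\<close>,
  after clearing the denominator \<open>(n + pT)\<^sup>2\<close> and dividing by \<open>T\<close>.\<close>
definition mite_total_poly ::
  "real \<Rightarrow> real \<Rightarrow> real \<Rightarrow> real \<Rightarrow> real \<Rightarrow> real \<Rightarrow> real \<Rightarrow> real" where
  "mite_total_poly r K c delta n p T =
     r * (1 - T / K) * (n + p * T)\<^sup>2
     - ((n + p * T) - r * (1 - T / K)) * (c * (n + p * T) + delta * (r * T * (1 - T / K)))"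

lemma S_equilibrium_no_healthy_bees:
  assumes "I > 0" "(m + mu) * I = b" "mite_balance r K (beta * I) delta n p M N"
  shows "S_equilibrium b lam gam m mu r K beta delta e n p (0, I, M, N)"
  using assms unfolding S_equilibrium_def S_field_def mite_balance_def
  by (simp add: algebra_simps)

lemma mite_total_poly_root_exists:
  assumes "c > 0" "K > 0" "n > 0" "p > 0" "c * (r - n) + r * n > 0"
  shows "\<exists>T. 0 < T \<and> T < K \<and> mite_total_poly r K c delta n p T = 0"
proof -
  let ?q = "mite_total_poly r K c delta n p"
  have "?q 0 = n * (c * (r - n) + r * n)"
    by (simp add: mite_total_poly_def power2_eq_square algebra_simps)
  with assms have q0: "?q 0 > 0" by simp
  have "?q K = - c * (n + p * K)\<^sup>2"
    using assms(2) by (simp add: mite_total_poly_def power2_eq_square algebra_simps)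
  moreover have "n + p * K > 0" using assms by (simp add: add_pos_pos)
  ultimately have qK: "?q K < 0" using assms(1) by (simp add: mult_pos_pos)
  have "\<exists>T\<ge>0. T \<le> K \<and> ?q T = 0"
    by (rule IVT2) (use q0 qK assms in \<open>auto simp: mite_total_poly_def intro!: continuous_intros\<close>)
  then obtain T where "0 \<le> T" "T \<le> K" "?q T = 0" by blast
  moreover from this q0 qK have "T \<noteq> 0" "T \<noteq> K" by auto
  ultimately show ?thesis by (metis order.order_iff_strict)
qed

lemma mite_balance_from_root:
  assumes "c > 0" "delta > 0" "r > 0" "K > 0" "n > 0" "p > 0"
    and "0 < T" "T < K" "mite_total_poly r K c delta n p T = 0"
  obtains M N where "M > 0" "N > 0" "mite_balance r K c delta n p M N"
proof -
  define D where "D = n + p * T"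
  define A where "A = r * T * (1 - T / K)"
  define N where "N = A / D"
  define M where "M = T - N"
  have D_pos: "D > 0" and A_pos: "A > 0"
    using assms unfolding D_def A_def by (simp_all add: add_pos_pos)
  have N_pos: "N > 0" unfolding N_def using A_pos D_pos by simp
  have sum: "M + N = T" unfolding M_def by simp
  have "A * D\<^sup>2 - (T * D - A) * (c * D + delta * A) = T * mite_total_poly r K c delta n p T"
    unfolding mite_total_poly_def A_def D_def using assms(4)
    by (simp add: field_simps power2_eq_square)
  then have cleared: "(T * D - A) * (c * D + delta * A) = A * D\<^sup>2"
    using assms(9) by simp
  have balance: "M * (c + delta * N) = N * D"
  proof -
    have "M * (c + delta * N) = (T * D - A) * (c * D + delta * A) / D\<^sup>2"
      unfolding M_def N_def using D_pos by (simp add: field_simps power2_eq_square)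
    also have "\<dots> = N * D" unfolding cleared N_def using D_pos by (simp add: power2_eq_square)
    finally show ?thesis .
  qed
  have "M * (c + delta * N) > 0" unfolding balance using N_pos D_pos by simp
  moreover have "c + delta * N > 0" using assms N_pos by (simp add: add_pos_pos)
  ultimately have M_pos: "M > 0" by (simp add: zero_less_mult_iff)
  have "A = N * D" unfolding N_def using D_pos by simp
  then have "mite_balance r K c delta n p M N"
    using balance sum unfolding mite_balance_def A_def D_def by (simp add: algebra_simps)
  with M_pos N_pos show thesis by (rule that)
qed

lemma infection_pressure_condition:
  fixes beta b m mu n r :: real
  assumes "beta > 0" "b > 0" "m + mu > 0" "n > 0"
    and "r > beta * b / (m + mu) \<or> beta * b * (r - n) + r * n * (m + mu) > 0"
  shows "beta * (b / (m + mu)) * (r - n) + r * n > 0"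
  using assms(5)
proof
  define c where "c = beta * (b / (m + mu))"
  assume "r > beta * b / (m + mu)"
  then have "r > c" unfolding c_def by simp
  moreover have "c > 0" unfolding c_def using assms by simp
  ultimately have "n * (r - c) > 0" "c * r > 0" using assms(4) by simp_all
  then show ?thesis unfolding c_def[symmetric] by (simp add: algebra_simps)
next
  assume "beta * b * (r - n) + r * n * (m + mu) > 0"
  moreover have "beta * (b / (m + mu)) * (r - n) + r * n
      = (beta * b * (r - n) + r * n * (m + mu)) / (m + mu)"
    using assms(3) by (simp add: field_simps)
  ultimately show ?thesis using assms(3) by simp
qed

theorem mainTheorem3:
  fixes b lam gam m mu r K beta delta e n p :: real
  assumes "b > 0" "lam > 0" "gam > 0" "m > 0" "mu > 0" "r > 0" "K > 0"
    "beta > 0" "delta > 0" "e > 0" "n > 0" "p > 0"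
  assumes "r > beta * b / (m + mu) \<or> beta * b * (r - n) + r * n * (m + mu) > 0"
  shows "\<exists>M5 N5. M5 > 0 \<and> N5 > 0 \<and>
           S_equilibrium b lam gam m mu r K beta delta e n p (0, b / (m + mu), M5, N5)"
proof -
  define I where "I = b / (m + mu)"
  have "m + mu > 0" using assms by simp
  then have I_pos: "I > 0" and I_eq: "(m + mu) * I = b" and c_pos: "beta * I > 0"
    using assms unfolding I_def by simp_all
  have "beta * I * (r - n) + r * n > 0"
    unfolding I_def by (rule infection_pressure_condition) (use assms in simp_all)
  then obtain T where "0 < T" "T < K" "mite_total_poly r K (beta * I) delta n p T = 0"
    using mite_total_poly_root_exists[OF c_pos \<open>K > 0\<close> \<open>n > 0\<close> \<open>p > 0\<close>] by blast
  then obtain M N where "M > 0" "N > 0" "mite_balance r K (beta * I) delta n p M N"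
    using mite_balance_from_root[OF c_pos \<open>delta > 0\<close> \<open>r > 0\<close> \<open>K > 0\<close> \<open>n > 0\<close> \<open>p > 0\<close>]
    by blast
  then show ?thesis
    using S_equilibrium_no_healthy_bees[OF I_pos I_eq] unfolding I_def by blast
qed

end
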